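(* For all nonnegative integers $a_1,a_2,s$, \[ G(a_1,a_2,s)=\sum_{b_1,b_2\ge0}(-1)^{b_1+b_2}\binom{a_1+a_2-b_1-b_2}{s}\binom{a_1+a_2-b_1-b_2}{a_1-b_1}, \] where $\binom{N}{K}=0$ unless $0\le K\le N$.
   Context: For integers $a_1,a_2,s$ with $a=a_1+a_2$, $G(a_1,a_2,s)=\sum_m N_m$, the sum over integers $m$ such that $a_1-m,\ a_2-(s-m),\ m,\ s-m$ are all nonnegative (an empty sum is $0$), where $N_m$ is the number of permutations $\pi$ of $[a]$ that are decreasing within each of four consecutive blocks of positions of lengths $a_1-m,\ a_2-(s-m),\ m,\ s-m$ (in this order; arbitrary between blocks), and have no fixed point ($\pi_i=i$) in the first two blocks. *)

theory Defs
  imports "HOL-Combinatorics.Permutations"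
begin

definition dec_on :: "(nat \<Rightarrow> nat) \<Rightarrow> nat \<Rightarrow> nat \<Rightarrow> bool" where
  "dec_on p lo hi \<longleftrightarrow> (\<forall>i j. lo \<le> i \<and> i < j \<and> j \<le> hi \<longrightarrow> p j < p i)"

definition Ncount :: "nat \<Rightarrow> nat \<Rightarrow> nat \<Rightarrow> nat \<Rightarrow> nat" where
  "Ncount l1 l2 l3 l4 = card {p. p permutes {1..l1+l2+l3+l4}
      \<and> dec_on p 1 l1
      \<and> dec_on p (l1+1) (l1+l2)
      \<and> dec_on p (l1+l2+1) (l1+l2+l3)
      \<and> dec_on p (l1+l2+l3+1) (l1+l2+l3+l4)
      \<and> (\<forall>i\<in>{1..l1+l2}. p i \<noteq> i)}"

definition G :: "int \<Rightarrow> int \<Rightarrow> int \<Rightarrow> nat" where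
  "G a1 a2 s = (\<Sum>m\<in>{m::int. a1 - m \<ge> 0 \<and> a2 - (s - m) \<ge> 0 \<and> m \<ge> 0 \<and> s - m \<ge> 0}.
      Ncount (nat (a1 - m)) (nat (a2 - (s - m))) (nat m) (nat (s - m)))"

definition binom :: "int \<Rightarrow> int \<Rightarrow> int" where
  "binom N K = (if 0 \<le> K \<and> K \<le> N then int (nat N choose nat K) else 0)"

end

theory Submission
  imports Defs
begin

text \<open>Drop the fixed-point condition and let \<open>T(x, y)\<close> be the corresponding sum over \<open>m\<close> of
  the numbers of permutations decreasing on four blocks. The largest entry of such a permutation
  starts a block, and deleting it shows that each of these numbers is a multinomial coefficient;
  Vandermonde's identity then gives \<open>T(x, y) = C(x + y, s) C(x + y, x)\<close>. A decreasing block holds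
  at most one fixed point, and deleting it (and standardizing) is a bijection onto the permutations
  whose block is one shorter and has no fixed point. Sorting by which of the first two blocks
  contain a fixed point yields \<open>T(x, y) = G(x, y) + G(x-1, y) + G(x, y-1) + G(x-1, y-1)\<close>,
  and alternating sums invert this relation.\<close>

section \<open>Deleting an entry of a permutation\<close>

definition shift_down :: "nat \<Rightarrow> nat \<Rightarrow> nat" where
  "shift_down j x = (if x < j then x else x - 1)"

definition shift_up :: "nat \<Rightarrow> nat \<Rightarrow> nat" where
  "shift_up j x = (if x < j then x else x + 1)"

lemma shift_down_shift_up [simp]: "shift_down j (shift_up j x) = x"
  by (simp add: shift_down_def shift_up_def)

lemma shift_up_shift_down [simp]: "x \<noteq> j \<Longrightarrow> shift_up j (shift_down j x) = x"
  by (auto simp: shift_down_def shift_up_def)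

lemma shift_up_neq [simp]: "shift_up j x \<noteq> j" "j \<noteq> shift_up j x"
  by (simp_all add: shift_up_def)

lemma shift_up_less_iff [simp]: "shift_up j x < shift_up j y \<longleftrightarrow> x < y"
  by (auto simp: shift_up_def)

lemma shift_up_eq_iff [simp]: "shift_up j x = shift_up j y \<longleftrightarrow> x = y"
  by (auto simp: shift_up_def)

lemma shift_down_less_iff:
  "x \<noteq> j \<Longrightarrow> y \<noteq> j \<Longrightarrow> shift_down j x < shift_down j y \<longleftrightarrow> x < y"
  by (auto simp: shift_down_def)

lemma shift_down_eq_iff:
  "x \<noteq> j \<Longrightarrow> y \<noteq> j \<Longrightarrow> shift_down j x = shift_down j y \<longleftrightarrow> x = y"
  by (auto simp: shift_down_def)

text \<open>Deleting position \<open>j\<close> and value \<open>v = p j\<close> from the one-line notation of a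
  permutation of \<open>{1..n}\<close> and standardizing gives a permutation of \<open>{1..n-1}\<close>.\<close>

definition perm_delete :: "nat \<Rightarrow> nat \<Rightarrow> (nat \<Rightarrow> nat) \<Rightarrow> nat \<Rightarrow> nat" where
  "perm_delete j v p = (\<lambda>x. shift_down v (p (shift_up j x)))"

definition perm_insert :: "nat \<Rightarrow> nat \<Rightarrow> (nat \<Rightarrow> nat) \<Rightarrow> nat \<Rightarrow> nat" where
  "perm_insert j v q = (\<lambda>x. if x = j then v else shift_up v (q (shift_down j x)))"

lemma permutes_if_inj_on:
  assumes "finite S" "inj_on f S" "f ` S \<subseteq> S" "\<And>x. x \<notin> S \<Longrightarrow> f x = x"
  shows "f permutes S"
  using assms endo_inj_surj[of S f] by (intro bij_imp_permutes) (auto simp: bij_betw_def)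

lemma perm_delete_permutes:
  assumes p: "p permutes {1..n}" and pj: "p j = v" and j: "j \<in> {1..n}"
  shows "perm_delete j v p permutes {1..n-1}"
proof (rule permutes_if_inj_on)
  have "inj p" using p by (rule permutes_inj)
  then have nv: "p (shift_up j x) \<noteq> v" for x
    using pj shift_up_neq[of j x] by (metis injD)
  show "inj_on (perm_delete j v p) {1..n - 1}"
  proof (rule inj_onI)
    fix x y assume "perm_delete j v p x = perm_delete j v p y"
    then have "p (shift_up j x) = p (shift_up j y)"
      using nv by (simp add: perm_delete_def shift_down_eq_iff)
    then show "x = y" using \<open>inj p\<close> by (simp add: inj_eq)
  qed
  have v: "v \<in> {1..n}" using pj j permutes_in_image[OF p] by blast
  show "perm_delete j v p ` {1..n - 1} \<subseteq> {1..n - 1}"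
  proof clarify
    fix x assume "x \<in> {1..n-1}"
    then have "shift_up j x \<in> {1..n}" using j by (auto simp: shift_up_def)
    then have "p (shift_up j x) \<in> {1..n}" using permutes_in_image[OF p] by blast
    then show "perm_delete j v p x \<in> {1..n-1}"
      using nv[of x] v by (auto simp: perm_delete_def shift_down_def)
  qed
  fix x assume x: "x \<notin> {1..n-1}"
  then have "shift_up j x \<notin> {1..n}" "shift_down v (shift_up j x) = x"
    using j v by (auto simp: shift_up_def shift_down_def)
  then show "perm_delete j v p x = x"
    using permutes_not_in[OF p] by (simp add: perm_delete_def)
qed simp

lemma perm_insert_permutes:
  assumes q: "q permutes {1..n-1}" and j: "j \<in> {1..n}" and v: "v \<in> {1..n}"
  shows "perm_insert j v q permutes {1..n}"
proof (rule permutes_if_inj_on)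
  have "inj q" using q by (rule permutes_inj)
  show "inj_on (perm_insert j v q) {1..n}"
  proof (rule inj_onI)
    fix x y assume eq: "perm_insert j v q x = perm_insert j v q y"
    show "x = y"
    proof (cases "x = j \<or> y = j")
      case True
      then show ?thesis using eq by (auto simp: perm_insert_def split: if_splits)
    next
      case False
      then have "q (shift_down j x) = q (shift_down j y)" using eq by (simp add: perm_insert_def)
      then have "shift_down j x = shift_down j y" using \<open>inj q\<close> by (simp add: inj_eq)
      then show ?thesis using False by (metis shift_up_shift_down)
    qed
  qed
  show "perm_insert j v q ` {1..n} \<subseteq> {1..n}"
  proof clarify
    fix x assume x: "x \<in> {1..n}"
    show "perm_insert j v q x \<in> {1..n}"
    proof (cases "x = j")
      case False
      then have "shift_down j x \<in> {1..n-1}" using x j by (auto simp: shift_down_def)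
      then have "q (shift_down j x) \<in> {1..n-1}" using permutes_in_image[OF q] by blast
      then show ?thesis using False v by (auto simp: perm_insert_def shift_up_def)
    qed (use v in \<open>simp add: perm_insert_def\<close>)
  qed
  fix x assume x: "x \<notin> {1..n}"
  then have "shift_down j x \<notin> {1..n-1}" "shift_up v (shift_down j x) = x"
    using j v by (auto simp: shift_up_def shift_down_def)
  then show "perm_insert j v q x = x"
    using x j permutes_not_in[OF q] by (auto simp: perm_insert_def)
qed simp

lemma perm_delete_insert [simp]: "perm_delete j v (perm_insert j v q) = q"
  by (simp add: perm_delete_def perm_insert_def)

lemma perm_insert_delete:
  assumes "inj p" "p j = v"
  shows "perm_insert j v (perm_delete j v p) = p"
proof
  fix x show "perm_insert j v (perm_delete j v p) x = p x"
  proof (cases "x = j")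
    case False
    then have "p x \<noteq> v" using assms by (metis injD)
    then show ?thesis using False by (simp add: perm_insert_def perm_delete_def)
  qed (simp add: perm_insert_def assms)
qed

lemma perm_delete_less_iff:
  assumes "inj p" "p j = v"
  shows "perm_delete j v p x < perm_delete j v p y \<longleftrightarrow> p (shift_up j x) < p (shift_up j y)"
proof -
  have "p (shift_up j z) \<noteq> v" for z using assms shift_up_neq[of j z] by (metis injD)
  then show ?thesis by (simp add: perm_delete_def shift_down_less_iff)
qed

lemma perm_delete_fixpoint_iff:
  assumes "inj p" "p j = j"
  shows "perm_delete j j p x = x \<longleftrightarrow> p (shift_up j x) = shift_up j x"
proof -
  have "p (shift_up j x) \<noteq> j" using assms shift_up_neq[of j x] by (metis injD)
  then show ?thesis unfolding perm_delete_def by (metis shift_down_shift_up shift_up_shift_down)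
qed

section \<open>Permutations decreasing on blocks\<close>

text \<open>A cut at \<open>c \<in> B\<close> separates positions \<open>c\<close> and \<open>c + 1\<close>; \<open>dec_blocks B n p\<close> says that
  \<open>p\<close> is decreasing on every block of consecutive positions in \<open>{1..n}\<close> that no cut separates.\<close>

definition dec_blocks :: "nat set \<Rightarrow> nat \<Rightarrow> (nat \<Rightarrow> nat) \<Rightarrow> bool" where
  "dec_blocks B n p \<longleftrightarrow> (\<forall>i k. 1 \<le> i \<and> i < k \<and> k \<le> n \<and> {i..<k} \<inter> B = {} \<longrightarrow> p k < p i)"

lemma dec_onD: "dec_on p lo hi \<Longrightarrow> lo \<le> i \<Longrightarrow> i < k \<Longrightarrow> k \<le> hi \<Longrightarrow> p k < p i"
  unfolding dec_on_def by blast

lemma dec_blocksD: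
  "dec_blocks B n p \<Longrightarrow> 1 \<le> i \<Longrightarrow> i < k \<Longrightarrow> k \<le> n \<Longrightarrow> {i..<k} \<inter> B = {} \<Longrightarrow> p k < p i"
  unfolding dec_blocks_def by blast

lemma dec_blocks_imp_dec_on:
  assumes "dec_blocks B n p" "1 \<le> lo" "hi \<le> n" "{lo..<hi} \<inter> B = {}"
  shows "dec_on p lo hi"
  unfolding dec_on_def
proof (intro allI impI)
  fix i k assume ik: "lo \<le> i \<and> i < k \<and> k \<le> hi"
  then have "{i..<k} \<subseteq> {lo..<hi}" by auto
  then have "{i..<k} \<inter> B = {}" using assms(4) by blast
  moreover have "1 \<le> i" "i < k" "k \<le> n" using ik assms(2,3) by linarith+
  ultimately show "p k < p i" using dec_blocksD[OF assms(1)] by simp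
qed

lemma cut_free_shift_up:
  assumes "a < b" "{a..<b} \<inter> shift_down j ` B = {}"
  shows "{shift_up j a..<shift_up j b} \<inter> B = {}"
proof -
  have "shift_down j c \<in> {a..<b}" if "shift_up j a \<le> c" "c < shift_up j b" for c
    using that assms(1) by (auto simp: shift_up_def shift_down_def split: if_splits; arith)
  then show ?thesis using assms(2) by (force simp: disjoint_iff)
qed

lemma cut_free_shift_down:
  assumes "a < b" "a \<noteq> j" "b \<noteq> j" "0 < j" "{a..<b} \<inter> B = {}"
  shows "{shift_down j a..<shift_down j b} \<inter> shift_down j ` B = {}"
proof -
  have "c \<in> {a..<b}" if "shift_down j a \<le> shift_down j c" "shift_down j c < shift_down j b" for c
    using that assms(1-4) by (auto simp: shift_down_def split: if_splits; arith)
  then show ?thesis using assms(5) by (force simp: disjoint_iff)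
qed

lemma dec_blocks_perm_delete:
  assumes "inj p" "p j = v" "dec_blocks B n p"
  shows "dec_blocks (shift_down j ` B) (n - 1) (perm_delete j v p)"
  unfolding dec_blocks_def
proof (intro allI impI)
  fix a b assume ab: "1 \<le> a \<and> a < b \<and> b \<le> n - 1 \<and> {a..<b} \<inter> shift_down j ` B = {}"
  then have "{shift_up j a..<shift_up j b} \<inter> B = {}" by (intro cut_free_shift_up) auto
  moreover have "1 \<le> shift_up j a" "shift_up j a < shift_up j b" "shift_up j b \<le> n"
    using ab by (auto simp: shift_up_def)
  ultimately have "p (shift_up j b) < p (shift_up j a)" using dec_blocksD[OF assms(3)] by simp
  then show "perm_delete j v p b < perm_delete j v p a"
    by (simp add: perm_delete_less_iff[OF assms(1,2)])
qed

lemma dec_blocks_perm_insert: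
  assumes q: "dec_blocks (shift_down j ` B) (n - 1) q" and j: "j \<in> {1..n}"
    and before: "\<And>i. 1 \<le> i \<Longrightarrow> i < j \<Longrightarrow> {i..<j} \<inter> B = {} \<Longrightarrow> v \<le> q i"
    and after: "\<And>i. j < i \<Longrightarrow> i \<le> n \<Longrightarrow> {j..<i} \<inter> B = {} \<Longrightarrow> q (i - 1) < v"
  shows "dec_blocks B n (perm_insert j v q)"
  unfolding dec_blocks_def
proof (intro allI impI)
  fix a b assume ab: "1 \<le> a \<and> a < b \<and> b \<le> n \<and> {a..<b} \<inter> B = {}"
  consider "a = j" | "b = j" | "a \<noteq> j" "b \<noteq> j" by blast
  then show "perm_insert j v q b < perm_insert j v q a"
  proof cases
    case 1
    then have "q (b - 1) < v" using ab by (intro after) auto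
    then show ?thesis using 1 ab by (simp add: perm_insert_def shift_down_def shift_up_def)
  next
    case 2
    then have "v \<le> q a" using ab by (intro before) auto
    then show ?thesis using 2 ab by (simp add: perm_insert_def shift_down_def shift_up_def)
  next
    case 3
    then have "{shift_down j a..<shift_down j b} \<inter> shift_down j ` B = {}"
      using ab j by (intro cut_free_shift_down) auto
    moreover have "1 \<le> shift_down j a" "shift_down j a < shift_down j b" "shift_down j b \<le> n - 1"
      using ab 3 j by (auto simp: shift_down_def)
    ultimately have "q (shift_down j b) < q (shift_down j a)" using dec_blocksD[OF q] by simp
    then show ?thesis using 3 by (simp add: perm_insert_def)
  qed
qed

lemma card_eq_if_inverse_on:
  assumes "\<And>x. x \<in> A \<Longrightarrow> f x \<in> B \<and> g (f x) = x" "\<And>y. y \<in> B \<Longrightarrow> g y \<in> A \<and> f (g y) = y"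
  shows "card A = card B"
  using assms by (intro bij_betw_same_card[of f] bij_betw_byWitness[of _ g]) auto

lemma card_dec_blocks_max_at:
  assumes j: "j \<in> {1..n}" and first: "j = 1 \<or> j - 1 \<in> B"
  shows "card {p. p permutes {1..n} \<and> dec_blocks B n p \<and> p j = n}
       = card {q. q permutes {1..n - 1} \<and> dec_blocks (shift_down j ` B) (n - 1) q}"
    (is "card ?P = card ?Q")
proof (rule card_eq_if_inverse_on[where f = "perm_delete j n" and g = "perm_insert j n"])
  fix p assume "p \<in> ?P"
  then have p: "p permutes {1..n}" "dec_blocks B n p" "p j = n" by simp_all
  have "inj p" using p(1) by (rule permutes_inj)
  then show "perm_delete j n p \<in> ?Q \<and> perm_insert j n (perm_delete j n p) = p"
    using perm_delete_permutes[OF p(1,3) j] dec_blocks_perm_delete[OF \<open>inj p\<close> p(3,2)]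
      perm_insert_delete[OF \<open>inj p\<close> p(3)] by simp
next
  fix q assume "q \<in> ?Q"
  then have q: "q permutes {1..n - 1}" "dec_blocks (shift_down j ` B) (n - 1) q" by simp_all
  have "dec_blocks B n (perm_insert j n q)"
  proof (rule dec_blocks_perm_insert[OF q(2) j])
    fix i assume i: "1 \<le> i" "i < j" "{i..<j} \<inter> B = {}"
    then have "j - 1 \<in> {i..<j}" "j - 1 \<in> B" using first by auto
    then show "n \<le> q i" using i(3) by blast
  next
    fix i assume "j < i" "i \<le> n"
    then have "i - 1 \<in> {1..n - 1}" using j by auto
    then have "q (i - 1) \<in> {1..n - 1}" by (simp only: permutes_in_image[OF q(1)])
    then show "q (i - 1) < n" by auto
  qed
  moreover have "perm_insert j n q permutes {1..n}" using perm_insert_permutes[OF q(1) j] j by auto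
  moreover have "perm_insert j n q j = n" by (simp add: perm_insert_def)
  ultimately show "perm_insert j n q \<in> ?P \<and> perm_delete j n (perm_insert j n q) = q" by simp
qed

section \<open>Removing a fixed point from a block\<close>

lemma shift_down_image_block:
  assumes "{c+1..<c'} \<inter> B = {}" "j \<in> {c+1..c'}"
  shows "shift_down j ` B = shift_down (c+1) ` B"
proof (rule image_cong[OF refl])
  fix x assume "x \<in> B"
  have "x \<le> c \<or> c' \<le> x"
  proof (rule ccontr)
    assume "\<not> (x \<le> c \<or> c' \<le> x)"
    then have "x \<in> {c+1..<c'}" by auto
    then show False using assms(1) \<open>x \<in> B\<close> by blast
  qed
  then show "shift_down j x = shift_down (c+1) x" using assms(2) by (auto simp: shift_down_def)
qed

lemma dec_blocks_fixpoint_unique: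
  assumes "dec_blocks B n p" "1 \<le> lo" "hi \<le> n" "{lo..<hi} \<inter> B = {}"
    and "i \<in> {lo..hi}" "k \<in> {lo..hi}" "p i = i" "p k = k"
  shows "i = k"
proof -
  have dec: "dec_on p lo hi" by (rule dec_blocks_imp_dec_on[OF assms(1-4)])
  have no_less: "\<not> x < y" if "x \<in> {lo..hi}" "y \<in> {lo..hi}" "p x = x" "p y = y" for x y
  proof
    assume "x < y"
    moreover have "lo \<le> x" "y \<le> hi" using that(1,2) by auto
    ultimately have "p y < p x" using dec_onD[OF dec] by blast
    with \<open>x < y\<close> that(3,4) show False by simp
  qed
  show ?thesis
    using no_less[OF assms(5,6,7,8)] no_less[OF assms(6,5,8,7)] by (cases i k rule: linorder_cases) simp_all
qed

text \<open>Where a fixed point has to be inserted into \<open>q\<close> to keep it decreasing on \<open>{lo..hi}\<close>.\<close>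

definition fixpoint_slot :: "nat \<Rightarrow> nat \<Rightarrow> (nat \<Rightarrow> nat) \<Rightarrow> nat \<Rightarrow> bool" where
  "fixpoint_slot lo hi q i \<longleftrightarrow> lo \<le> i \<and> i \<le> hi
     \<and> (\<forall>x. lo \<le> x \<and> x < i \<longrightarrow> i \<le> q x) \<and> (\<forall>x. i \<le> x \<and> x < hi \<longrightarrow> q x < i)"

lemma fixpoint_slot_unique:
  assumes "fixpoint_slot lo hi q i" "fixpoint_slot lo hi q k"
  shows "i = k"
proof -
  have no_less: "\<not> x < y" if "fixpoint_slot lo hi q x" "fixpoint_slot lo hi q y" for x y
  proof
    assume "x < y"
    have "lo \<le> x" "y \<le> hi" using that unfolding fixpoint_slot_def by auto
    then have "y \<le> q x" using that(2) \<open>x < y\<close> unfolding fixpoint_slot_def by blast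
    moreover have "q x < x" using that(1) \<open>x < y\<close> \<open>y \<le> hi\<close> unfolding fixpoint_slot_def by auto
    ultimately show False using \<open>x < y\<close> by linarith
  qed
  show ?thesis using no_less[OF assms] no_less[OF assms(2,1)] by (cases i k rule: linorder_cases) simp_all
qed

lemma fixpoint_slot_exists:
  assumes dec: "dec_on q lo (hi - 1)" and no_fix: "\<forall>x\<in>{lo..hi - 1}. q x \<noteq> x" and "lo \<le> hi"
  shows "\<exists>i. fixpoint_slot lo hi q i"
proof -
  define P where "P i \<longleftrightarrow> lo \<le> i \<and> (i = hi \<or> q i < i)" for i
  define i where "i = (LEAST i. P i)"
  have "P hi" using assms by (simp add: P_def)
  then have Pi: "P i" and i_le: "i \<le> hi" unfolding i_def by (rule LeastI, rule Least_le)
  have above_diag: "x < q x" if "lo \<le> x" "x < i" for x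
  proof -
    have "\<not> P x" using that(2) unfolding i_def by (rule not_less_Least)
    moreover have "q x \<noteq> x" using no_fix that i_le by auto
    ultimately show ?thesis using that(1) by (auto simp: P_def)
  qed
  have "i \<le> q x" if "lo \<le> x" "x < i" for x
  proof -
    have "i - 1 < q (i - 1)" using above_diag[of "i - 1"] that by auto
    moreover have "q (i - 1) \<le> q x"
    proof (cases "x = i - 1")
      case False
      then have "x < i - 1" "i - 1 \<le> hi - 1" using that i_le by auto
      then show ?thesis using dec that(1) unfolding dec_on_def by (auto intro: less_imp_le)
    qed simp
    ultimately show ?thesis by linarith
  qed
  moreover have "q x < i" if "i \<le> x" "x < hi" for x
  proof -
    have "q i < i" using Pi that unfolding P_def by auto
    moreover have "q x \<le> q i"
    proof (cases "x = i")
      case False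
      then have "i < x" "x \<le> hi - 1" using that by auto
      then show ?thesis using dec Pi unfolding dec_on_def P_def by (auto intro: less_imp_le)
    qed simp
    ultimately show ?thesis by linarith
  qed
  ultimately show ?thesis using Pi i_le unfolding fixpoint_slot_def P_def by blast
qed

lemma fixpoint_slot_perm_delete:
  assumes "dec_on p lo hi" "i \<in> {lo..hi}" "p i = i"
  shows "fixpoint_slot lo hi (perm_delete i i p) i"
  unfolding fixpoint_slot_def
proof (intro conjI allI impI)
  fix x assume "lo \<le> x \<and> x < i"
  moreover have "i \<le> hi" using assms(2) by simp
  ultimately have "p i < p x" using assms(1) unfolding dec_on_def by blast
  then have "i < p x" using assms(3) by simp
  then show "i \<le> perm_delete i i p x" using \<open>lo \<le> x \<and> x < i\<close>
    by (simp add: perm_delete_def shift_up_def shift_down_def)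
next
  fix x assume "i \<le> x \<and> x < hi"
  moreover have "lo \<le> i" using assms(2) by simp
  ultimately have "p (x + 1) < p i" using assms(1) unfolding dec_on_def by auto
  then have "p (x + 1) < i" using assms(3) by simp
  then show "perm_delete i i p x < i" using \<open>i \<le> x \<and> x < hi\<close>
    by (simp add: perm_delete_def shift_up_def shift_down_def)
qed (use assms in auto)

lemma perm_delete_fixpoint_free:
  assumes "dec_blocks B n p" "1 \<le> lo" "hi \<le> n" "{lo..<hi} \<inter> B = {}"
    and "inj p" "i \<in> {lo..hi}" "p i = i"
  shows "\<forall>y\<in>{lo..hi - 1}. perm_delete i i p y \<noteq> y"
proof
  fix y assume y: "y \<in> {lo..hi - 1}"
  show "perm_delete i i p y \<noteq> y"
  proof
    assume "perm_delete i i p y = y"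
    then have "p (shift_up i y) = shift_up i y" using perm_delete_fixpoint_iff[OF assms(5,7)] by blast
    moreover have "shift_up i y \<in> {lo..hi}" using y assms(2,6) by (auto simp: shift_up_def)
    ultimately have "shift_up i y = i" using dec_blocks_fixpoint_unique assms(1-4,6,7) by blast
    then show False by simp
  qed
qed

lemma dec_blocks_perm_insert_fixpoint:
  assumes q: "dec_blocks (shift_down (c+1) ` B) (n - 1) q"
    and block: "c' \<le> n" "c = 0 \<or> c \<in> B" "c' \<in> B" "{c+1..<c'} \<inter> B = {}"
    and slot: "fixpoint_slot (c+1) c' q i"
  shows "dec_blocks B n (perm_insert i i q)"
proof -
  have i: "i \<in> {c+1..c'}" using slot unfolding fixpoint_slot_def by auto
  then have i_range: "i \<in> {1..n}" using block(1) by auto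
  have "dec_blocks (shift_down i ` B) (n - 1) q"
    using q shift_down_image_block[OF block(4) i] by simp
  then show ?thesis
  proof (rule dec_blocks_perm_insert[OF _ i_range])
    fix x assume x: "1 \<le> x" "x < i" "{x..<i} \<inter> B = {}"
    have "c + 1 \<le> x"
    proof (rule ccontr)
      assume "\<not> c + 1 \<le> x"
      then have "c \<in> {x..<i}" "c \<noteq> 0" using x i by auto
      then show False using x(3) block(2) by blast
    qed
    then show "i \<le> q x" using slot x(2) unfolding fixpoint_slot_def by blast
  next
    fix x assume x: "i < x" "x \<le> n" "{i..<x} \<inter> B = {}"
    have "x \<le> c'"
    proof (rule ccontr)
      assume "\<not> x \<le> c'"
      then have "c' \<in> {i..<x}" using i by auto
      then show False using x(3) block(3) by blast
    qed
    then have "i \<le> x - 1" "x - 1 < c'" using x(1) by auto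
    then show "q (x - 1) < i" using slot unfolding fixpoint_slot_def by blast
  qed
qed

lemma cut_free_block_shift_down:
  assumes "{c+1..<c'} \<inter> B = {}"
  shows "{c+1..<c' - 1} \<inter> shift_down (c+1) ` B = {}"
proof -
  have "shift_down (c+1) x \<notin> {c+1..<c' - 1}" if "x \<in> B" for x
  proof -
    have "x \<notin> {c+1..<c'}" using that assms by blast
    then show ?thesis by (auto simp: shift_down_def)
  qed
  then show ?thesis by blast
qed

lemma perm_delete_fixpoint_in_block:
  assumes block: "c' \<le> n" "{c+1..<c'} \<inter> B = {}"
    and p: "p permutes {1..n}" "dec_blocks B n p" and i: "i \<in> {c+1..c'}" "p i = i"
  shows "perm_delete i i p permutes {1..n - 1}"
    and "dec_blocks (shift_down (c+1) ` B) (n - 1) (perm_delete i i p)"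
    and "\<forall>y\<in>{c+1..c' - 1}. perm_delete i i p y \<noteq> y"
    and "fixpoint_slot (c+1) c' (perm_delete i i p) i"
proof -
  have "inj p" using p(1) by (rule permutes_inj)
  show "perm_delete i i p permutes {1..n - 1}"
    using perm_delete_permutes[OF p(1) i(2)] i(1) block(1) by simp
  show "dec_blocks (shift_down (c+1) ` B) (n - 1) (perm_delete i i p)"
    using dec_blocks_perm_delete[OF \<open>inj p\<close> i(2) p(2)] shift_down_image_block[OF block(2) i(1)]
    by simp
  show "\<forall>y\<in>{c+1..c' - 1}. perm_delete i i p y \<noteq> y"
    using perm_delete_fixpoint_free[OF p(2) _ block \<open>inj p\<close> i] by simp
  show "fixpoint_slot (c+1) c' (perm_delete i i p) i"
    using fixpoint_slot_perm_delete dec_blocks_imp_dec_on[OF p(2) _ block] i by simp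
qed

lemma perm_insert_fixpoint_in_block:
  assumes block: "c < c'" "c' \<le> n" "c = 0 \<or> c \<in> B" "c' \<in> B" "{c+1..<c'} \<inter> B = {}"
    and q: "q permutes {1..n - 1}" "dec_blocks (shift_down (c+1) ` B) (n - 1) q"
      "\<forall>i\<in>{c+1..c' - 1}. q i \<noteq> i"
  obtains i where "fixpoint_slot (c+1) c' q i" "i \<in> {c+1..c'}"
    "perm_insert i i q permutes {1..n}" "dec_blocks B n (perm_insert i i q)"
proof -
  have "dec_on q (c+1) (c' - 1)"
    using q(2) block(2) cut_free_block_shift_down[OF block(5)] by (intro dec_blocks_imp_dec_on) auto
  then obtain i where i: "fixpoint_slot (c+1) c' q i"
    using fixpoint_slot_exists q(3) block(1) by fastforce
  then have i_block: "i \<in> {c+1..c'}" unfolding fixpoint_slot_def by auto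
  then have "perm_insert i i q permutes {1..n}" using perm_insert_permutes[OF q(1)] block(2) by simp
  moreover have "dec_blocks B n (perm_insert i i q)"
    using dec_blocks_perm_insert_fixpoint[OF q(2) block(2-5) i] .
  ultimately show ?thesis using that i i_block by blast
qed

lemma card_dec_blocks_fixpoint_in_block:
  assumes block: "c < c'" "c' \<le> n" "c = 0 \<or> c \<in> B" "c' \<in> B" "{c+1..<c'} \<inter> B = {}"
    and D: "\<And>p i. p permutes {1..n} \<Longrightarrow> i \<in> {c+1..c'} \<Longrightarrow> p i = i
      \<Longrightarrow> D p \<longleftrightarrow> D' (perm_delete i i p)"
  shows "card {p. p permutes {1..n} \<and> dec_blocks B n p \<and> (\<exists>i\<in>{c+1..c'}. p i = i) \<and> D p}
       = card {q. q permutes {1..n - 1} \<and> dec_blocks (shift_down (c+1) ` B) (n - 1) q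
                  \<and> (\<forall>i\<in>{c+1..c' - 1}. q i \<noteq> i) \<and> D' q}"
    (is "card ?P = card ?Q")
proof -
  define fix_pos where "fix_pos p = (THE i. i \<in> {c+1..c'} \<and> p i = i)" for p :: "nat \<Rightarrow> nat"
  define slot where "slot q = (THE i. fixpoint_slot (c+1) c' q i)" for q
  have fix_pos: "fix_pos p = i" if "dec_blocks B n p" "i \<in> {c+1..c'}" "p i = i" for p i
    unfolding fix_pos_def
  proof (rule the_equality)
    fix k assume "k \<in> {c+1..c'} \<and> p k = k"
    then show "k = i" using dec_blocks_fixpoint_unique[OF that(1) _ block(2,5)] that by auto
  qed (use that in simp)
  have slot: "slot q = i" if "fixpoint_slot (c+1) c' q i" for q i
    unfolding slot_def using fixpoint_slot_unique that by (intro the_equality) auto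
  show ?thesis
  proof (rule card_eq_if_inverse_on[where f = "\<lambda>p. perm_delete (fix_pos p) (fix_pos p) p"
        and g = "\<lambda>q. perm_insert (slot q) (slot q) q"])
    fix p assume "p \<in> ?P"
    then obtain i where p: "p permutes {1..n}" "dec_blocks B n p" "D p"
      and i: "i \<in> {c+1..c'}" "p i = i" by auto
    note del = perm_delete_fixpoint_in_block[OF block(2,5) p(1,2) i]
    have "inj p" using p(1) by (rule permutes_inj)
    then show "perm_delete (fix_pos p) (fix_pos p) p \<in> ?Q
        \<and> perm_insert (slot (perm_delete (fix_pos p) (fix_pos p) p))
            (slot (perm_delete (fix_pos p) (fix_pos p) p)) (perm_delete (fix_pos p) (fix_pos p) p) = p"
      using fix_pos[OF p(2) i] del slot[OF del(4)] D[OF p(1) i] p(3)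
        perm_insert_delete[OF \<open>inj p\<close> i(2)] by simp
  next
    fix q assume "q \<in> ?Q"
    then have q: "q permutes {1..n - 1}" "dec_blocks (shift_down (c+1) ` B) (n - 1) q"
      "\<forall>i\<in>{c+1..c' - 1}. q i \<noteq> i" "D' q" by auto
    obtain i where i: "fixpoint_slot (c+1) c' q i" and i_block: "i \<in> {c+1..c'}"
      and "perm_insert i i q permutes {1..n}" "dec_blocks B n (perm_insert i i q)"
      using perm_insert_fixpoint_in_block[OF block q(1-3)] .
    moreover have "perm_insert i i q i = i" by (simp add: perm_insert_def)
    ultimately show "perm_insert (slot q) (slot q) q \<in> ?P
        \<and> perm_delete (fix_pos (perm_insert (slot q) (slot q) q))
            (fix_pos (perm_insert (slot q) (slot q) q)) (perm_insert (slot q) (slot q) q) = q"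
      using slot[OF i] i_block D[of "perm_insert i i q" i] q(4) fix_pos[of "perm_insert i i q" i] by auto
  qed
qed

lemma dec_blocks_max_at_block_start:
  assumes p: "p permutes {1..n}" "dec_blocks B n p" and j: "j \<in> {1..n}" "p j = n"
  shows "j = 1 \<or> j - 1 \<in> B"
proof (rule ccontr)
  assume "\<not> (j = 1 \<or> j - 1 \<in> B)"
  moreover have "{j - 1..<j} = {j - 1}" using j(1) by auto
  ultimately have "1 \<le> j - 1" "{j - 1..<j} \<inter> B = {}" using j(1) by auto
  then have "p j < p (j - 1)" using dec_blocksD[OF p(2)] j(1) by simp
  moreover have "j - 1 \<in> {1..n}" using j(1) \<open>1 \<le> j - 1\<close> by auto
  then have "p (j - 1) \<in> {1..n}" by (simp only: permutes_in_image[OF p(1)])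
  ultimately show False using j(2) by simp
qed

lemma card_dec_blocks_by_max:
  assumes "0 < n"
  shows "card {p. p permutes {1..n} \<and> dec_blocks B n p}
       = (\<Sum>j\<in>{j\<in>{1..n}. j = 1 \<or> j - 1 \<in> B}.
            card {q. q permutes {1..n - 1} \<and> dec_blocks (shift_down j ` B) (n - 1) q})"
proof -
  let ?J = "{j\<in>{1..n}. j = 1 \<or> j - 1 \<in> B}"
  let ?A = "\<lambda>j. {p. p permutes {1..n} \<and> dec_blocks B n p \<and> p j = n}"
  have "{p. p permutes {1..n} \<and> dec_blocks B n p} = (\<Union>j\<in>?J. ?A j)"
  proof (intro equalityI subsetI)
    fix p assume "p \<in> {p. p permutes {1..n} \<and> dec_blocks B n p}"
    then have p: "p permutes {1..n}" "dec_blocks B n p" by auto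
    obtain j where j: "p j = n" using permutes_surj[OF p(1)] by (metis surjD)
    have "j \<in> {1..n}" using permutes_in_image[OF p(1), of j] j assms by simp
    then show "p \<in> (\<Union>j\<in>?J. ?A j)" using dec_blocks_max_at_block_start[OF p _ j] p j by auto
  qed auto
  moreover have "finite (?A j)" for j
    by (rule finite_subset[OF _ finite_permutations[of "{1..n}"]]) auto
  moreover have "?A i \<inter> ?A j = {}" if "i \<noteq> j" for i j
    using that by (auto dest: permutes_inj injD)
  ultimately have "card {p. p permutes {1..n} \<and> dec_blocks B n p} = (\<Sum>j\<in>?J. card (?A j))"
    by (simp add: card_UN_disjoint)
  also have "\<dots> = (\<Sum>j\<in>?J. card {q. q permutes {1..n - 1} \<and> dec_blocks (shift_down j ` B) (n - 1) q})"
    by (rule sum.cong[OF refl]) (rule card_dec_blocks_max_at, auto)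
  finally show ?thesis .
qed

section \<open>Four blocks\<close>

definition block_cuts :: "nat \<Rightarrow> nat \<Rightarrow> nat \<Rightarrow> nat set" where
  "block_cuts l1 l2 l3 = {l1, l1 + l2, l1 + l2 + l3}"

definition block_perms :: "nat \<Rightarrow> nat \<Rightarrow> nat \<Rightarrow> nat \<Rightarrow> (nat \<Rightarrow> nat) set" where
  "block_perms l1 l2 l3 l4 = {p. p permutes {1..l1 + l2 + l3 + l4}
     \<and> dec_blocks (block_cuts l1 l2 l3) (l1 + l2 + l3 + l4) p}"

lemma finite_block_perms: "finite (block_perms l1 l2 l3 l4)"
  unfolding block_perms_def
  by (rule finite_subset[OF _ finite_permutations[of "{1..l1 + l2 + l3 + l4}"]]) auto

lemma dec_blocks_block_cuts_iff:
  "dec_blocks (block_cuts l1 l2 l3) (l1 + l2 + l3 + l4) p \<longleftrightarrow>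
     dec_on p 1 l1 \<and> dec_on p (l1 + 1) (l1 + l2) \<and> dec_on p (l1 + l2 + 1) (l1 + l2 + l3)
     \<and> dec_on p (l1 + l2 + l3 + 1) (l1 + l2 + l3 + l4)"
  (is "?dec \<longleftrightarrow> ?on")
proof
  assume ?dec
  then show ?on by (auto intro!: dec_blocks_imp_dec_on simp: block_cuts_def)
next
  assume ?on
  show ?dec unfolding dec_blocks_def
  proof (intro allI impI)
    fix i k assume ik: "1 \<le> i \<and> i < k \<and> k \<le> l1 + l2 + l3 + l4 \<and> {i..<k} \<inter> block_cuts l1 l2 l3 = {}"
    then have "l1 \<notin> {i..<k}" "l1 + l2 \<notin> {i..<k}" "l1 + l2 + l3 \<notin> {i..<k}"
      unfolding block_cuts_def by auto
    then consider "k \<le> l1" | "l1 < i" "k \<le> l1 + l2" | "l1 + l2 < i" "k \<le> l1 + l2 + l3"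
      | "l1 + l2 + l3 < i"
      using ik by fastforce
    then show "p k < p i"
      using \<open>?on\<close> ik by cases (auto intro: dec_onD)
  qed
qed

lemma perm_delete_has_fixpoint_iff:
  assumes "inj p" "p j = j" "0 < j" "j \<notin> {c+1..c'}"
  shows "(\<exists>y\<in>{shift_down j c + 1..shift_down j c'}. perm_delete j j p y = y)
     \<longleftrightarrow> (\<exists>x\<in>{c+1..c'}. p x = x)"
proof -
  have range: "y \<in> {shift_down j c + 1..shift_down j c'} \<longleftrightarrow> shift_up j y \<in> {c+1..c'}" for y
    using assms(3,4) by (auto simp: shift_down_def shift_up_def)
  show ?thesis
  proof
    assume "\<exists>y\<in>{shift_down j c + 1..shift_down j c'}. perm_delete j j p y = y"
    then obtain y where "shift_up j y \<in> {c+1..c'}" "p (shift_up j y) = shift_up j y"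
      using range perm_delete_fixpoint_iff[OF assms(1,2)] by blast
    then show "\<exists>x\<in>{c+1..c'}. p x = x" by blast
  next
    assume "\<exists>x\<in>{c+1..c'}. p x = x"
    then obtain x where x: "x \<in> {c+1..c'}" "p x = x" by blast
    then have up: "shift_up j (shift_down j x) = x" using assms(4) by auto
    then have "shift_down j x \<in> {shift_down j c + 1..shift_down j c'}"
      using x(1) range[of "shift_down j x"] by simp
    moreover have "perm_delete j j p (shift_down j x) = shift_down j x"
      using up x(2) perm_delete_fixpoint_iff[OF assms(1,2)] by simp
    ultimately show "\<exists>y\<in>{shift_down j c + 1..shift_down j c'}. perm_delete j j p y = y" by blast
  qed
qed

lemma shift_down_block_cuts:
  "0 < l1 \<Longrightarrow> shift_down 1 ` block_cuts l1 l2 l3 = block_cuts (l1 - 1) l2 l3"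
  "0 < l2 \<Longrightarrow> shift_down (l1 + 1) ` block_cuts l1 l2 l3 = block_cuts l1 (l2 - 1) l3"
  "0 < l3 \<Longrightarrow> shift_down (l1 + l2 + 1) ` block_cuts l1 l2 l3 = block_cuts l1 l2 (l3 - 1)"
  "shift_down (l1 + l2 + l3 + 1) ` block_cuts l1 l2 l3 = block_cuts l1 l2 l3"
  by (auto simp: block_cuts_def shift_down_def)

definition block_perms_fix :: "nat \<Rightarrow> nat \<Rightarrow> nat \<Rightarrow> nat \<Rightarrow> bool \<Rightarrow> bool \<Rightarrow> (nat \<Rightarrow> nat) set" where
  "block_perms_fix l1 l2 l3 l4 b1 b2 = {p \<in> block_perms l1 l2 l3 l4.
     (\<exists>i\<in>{1..l1}. p i = i) = b1 \<and> (\<exists>i\<in>{l1 + 1..l1 + l2}. p i = i) = b2}"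

lemma Ncount_eq_card_block_perms_fix: "Ncount l1 l2 l3 l4 = card (block_perms_fix l1 l2 l3 l4 False False)"
proof -
  have "{1..l1 + l2} = {1..l1} \<union> {l1 + 1..l1 + l2}" by auto
  then have "(\<forall>i\<in>{1..l1 + l2}. p i \<noteq> i)
      \<longleftrightarrow> \<not> (\<exists>i\<in>{1..l1}. p i = i) \<and> \<not> (\<exists>i\<in>{l1 + 1..l1 + l2}. p i = i)" for p :: "nat \<Rightarrow> nat"
    by blast
  then show ?thesis
    unfolding Ncount_def block_perms_fix_def block_perms_def dec_blocks_block_cuts_iff
    by (intro arg_cong[where f = card]) blast
qed

lemma card_block_perms_fix_first:
  "card (block_perms_fix (Suc L) l2 l3 l4 True b) = card (block_perms_fix L l2 l3 l4 False b)"
proof -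
  define n where "n = Suc L + l2 + l3 + l4"
  let ?B = "block_cuts (Suc L) l2 l3"
  let ?D = "\<lambda>p. (\<exists>i\<in>{Suc L + 1..Suc L + l2}. p i = i) = b"
  let ?D' = "\<lambda>q. (\<exists>i\<in>{L + 1..L + l2}. q i = i) = b"
  have P: "block_perms_fix (Suc L) l2 l3 l4 True b
      = {p. p permutes {1..n} \<and> dec_blocks ?B n p \<and> (\<exists>i\<in>{0 + 1..Suc L}. p i = i) \<and> ?D p}"
    unfolding block_perms_fix_def block_perms_def n_def by (intro Collect_cong) simp
  have Q: "block_perms_fix L l2 l3 l4 False b
      = {q. q permutes {1..n - 1} \<and> dec_blocks (shift_down (0 + 1) ` ?B) (n - 1) q
          \<and> (\<forall>i\<in>{0 + 1..Suc L - 1}. q i \<noteq> i) \<and> ?D' q}"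
  proof -
    have "shift_down (0 + 1) ` ?B = block_cuts L l2 l3"
      using shift_down_block_cuts(1)[of "Suc L" l2 l3] by simp
    then show ?thesis unfolding block_perms_fix_def block_perms_def n_def by (intro Collect_cong) simp
  qed
  show ?thesis unfolding P Q
  proof (rule card_dec_blocks_fixpoint_in_block)
    fix p i assume p: "p permutes {1..n}" and i: "i \<in> {0 + 1..Suc L}" "p i = i"
    have "shift_down i (Suc L) = L" "shift_down i (Suc L + l2) = L + l2"
      using i(1) by (auto simp: shift_down_def)
    then show "?D p \<longleftrightarrow> ?D' (perm_delete i i p)"
      using perm_delete_has_fixpoint_iff[OF permutes_inj[OF p] i(2), of "Suc L" "Suc L + l2"] i(1)
      by simp
  qed (auto simp: n_def block_cuts_def)
qed

lemma card_block_perms_fix_second: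
  "card (block_perms_fix l1 (Suc M) l3 l4 b True) = card (block_perms_fix l1 M l3 l4 b False)"
proof -
  define n where "n = l1 + Suc M + l3 + l4"
  let ?B = "block_cuts l1 (Suc M) l3"
  let ?D = "\<lambda>p. (\<exists>i\<in>{1..l1}. p i = i) = b"
  have P: "block_perms_fix l1 (Suc M) l3 l4 b True
      = {p. p permutes {1..n} \<and> dec_blocks ?B n p \<and> (\<exists>i\<in>{l1 + 1..l1 + Suc M}. p i = i) \<and> ?D p}"
    unfolding block_perms_fix_def block_perms_def n_def by (intro Collect_cong) (simp add: conj_ac)
  have Q: "block_perms_fix l1 M l3 l4 b False
      = {q. q permutes {1..n - 1} \<and> dec_blocks (shift_down (l1 + 1) ` ?B) (n - 1) q
          \<and> (\<forall>i\<in>{l1 + 1..l1 + Suc M - 1}. q i \<noteq> i) \<and> ?D q}"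
  proof -
    have "shift_down (l1 + 1) ` ?B = block_cuts l1 M l3"
      using shift_down_block_cuts(2)[of "Suc M" l1 l3] by simp
    then show ?thesis
      unfolding block_perms_fix_def block_perms_def n_def by (intro Collect_cong) (simp add: conj_ac)
  qed
  show ?thesis unfolding P Q
  proof (rule card_dec_blocks_fixpoint_in_block)
    fix p i assume p: "p permutes {1..n}" and i: "i \<in> {l1 + 1..l1 + Suc M}" "p i = i"
    have "shift_down i 0 = 0" "shift_down i l1 = l1" using i(1) by (auto simp: shift_down_def)
    then show "?D p \<longleftrightarrow> ?D (perm_delete i i p)"
      using perm_delete_has_fixpoint_iff[OF permutes_inj[OF p] i(2), of 0 l1] i(1) by simp
  qed (auto simp: n_def block_cuts_def)
qed

lemma block_perms_fix_first_empty: "block_perms_fix 0 l2 l3 l4 True b = {}"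
  by (simp add: block_perms_fix_def)

lemma block_perms_fix_second_empty: "block_perms_fix l1 0 l3 l4 b True = {}"
  by (simp add: block_perms_fix_def)

lemma card_block_perms_eq_Ncount_sum:
  "card (block_perms l1 l2 l3 l4) = Ncount l1 l2 l3 l4
    + (if 0 < l1 then Ncount (l1 - 1) l2 l3 l4 else 0)
    + (if 0 < l2 then Ncount l1 (l2 - 1) l3 l4 else 0)
    + (if 0 < l1 \<and> 0 < l2 then Ncount (l1 - 1) (l2 - 1) l3 l4 else 0)"
proof -
  let ?F = "block_perms_fix l1 l2 l3 l4"
  have fin: "finite (?F b1 b2)" for b1 b2
    using finite_block_perms by (simp add: block_perms_fix_def)
  have disj: "?F b1 b2 \<inter> ?F b1' b2' = {}" if "(b1, b2) \<noteq> (b1', b2')" for b1 b2 b1' b2'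
    using that by (auto simp: block_perms_fix_def)
  have "block_perms l1 l2 l3 l4 = ?F False False \<union> ?F True False \<union> ?F False True \<union> ?F True True"
    by (auto simp: block_perms_fix_def)
  also have "card \<dots> = card (?F False False) + card (?F True False) + card (?F False True) + card (?F True True)"
    using fin disj by (simp add: card_Un_disjoint Int_Un_distrib2)
  finally have "card (block_perms l1 l2 l3 l4)
      = card (?F False False) + card (?F True False) + card (?F False True) + card (?F True True)" .
  moreover have "card (?F True False) = (if 0 < l1 then Ncount (l1 - 1) l2 l3 l4 else 0)"
    by (cases l1) (simp_all add: block_perms_fix_first_empty card_block_perms_fix_first
        Ncount_eq_card_block_perms_fix)
  moreover have "card (?F False True) = (if 0 < l2 then Ncount l1 (l2 - 1) l3 l4 else 0)"
    by (cases l2) (simp_all add: block_perms_fix_second_empty card_block_perms_fix_second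
        Ncount_eq_card_block_perms_fix)
  moreover have "card (?F True True) = (if 0 < l1 \<and> 0 < l2 then Ncount (l1 - 1) (l2 - 1) l3 l4 else 0)"
    by (cases l1; cases l2) (simp_all add: block_perms_fix_first_empty block_perms_fix_second_empty
        card_block_perms_fix_first card_block_perms_fix_second Ncount_eq_card_block_perms_fix)
  ultimately show ?thesis by (simp add: Ncount_eq_card_block_perms_fix)
qed

lemma block_starts:
  "{j\<in>{1..l1 + l2 + l3 + l4}. j = 1 \<or> j - 1 \<in> block_cuts l1 l2 l3}
    = (if 0 < l1 then {1} else {}) \<union> (if 0 < l2 then {l1 + 1} else {})
      \<union> (if 0 < l3 then {l1 + l2 + 1} else {}) \<union> (if 0 < l4 then {l1 + l2 + l3 + 1} else {})"
  by (auto simp: block_cuts_def)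

lemma card_block_perms_by_max:
  assumes "0 < l1 + l2 + l3 + l4"
  shows "card (block_perms l1 l2 l3 l4)
    = (if 0 < l1 then card (block_perms (l1 - 1) l2 l3 l4) else 0)
    + (if 0 < l2 then card (block_perms l1 (l2 - 1) l3 l4) else 0)
    + (if 0 < l3 then card (block_perms l1 l2 (l3 - 1) l4) else 0)
    + (if 0 < l4 then card (block_perms l1 l2 l3 (l4 - 1)) else 0)"
proof -
  define n where "n = l1 + l2 + l3 + l4"
  define g where "g j = card {q. q permutes {1..n - 1}
      \<and> dec_blocks (shift_down j ` block_cuts l1 l2 l3) (n - 1) q}" for j
  have "card (block_perms l1 l2 l3 l4) = (\<Sum>j\<in>{j\<in>{1..n}. j = 1 \<or> j - 1 \<in> block_cuts l1 l2 l3}. g j)"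
    unfolding block_perms_def g_def n_def using card_dec_blocks_by_max assms by simp
  also have "\<dots> = (if 0 < l1 then g 1 else 0) + (if 0 < l2 then g (l1 + 1) else 0)
      + (if 0 < l3 then g (l1 + l2 + 1) else 0) + (if 0 < l4 then g (l1 + l2 + l3 + 1) else 0)"
    unfolding n_def block_starts by (simp add: sum.union_disjoint)
  moreover have "g 1 = card (block_perms (l1 - 1) l2 l3 l4)" if "0 < l1"
    using that unfolding g_def shift_down_block_cuts(1)[OF that] block_perms_def n_def by simp
  moreover have "g (l1 + 1) = card (block_perms l1 (l2 - 1) l3 l4)" if "0 < l2"
    using that unfolding g_def shift_down_block_cuts(2)[OF that] block_perms_def n_def by simp
  moreover have "g (l1 + l2 + 1) = card (block_perms l1 l2 (l3 - 1) l4)" if "0 < l3"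
    using that unfolding g_def shift_down_block_cuts(3)[OF that] block_perms_def n_def by simp
  moreover have "g (l1 + l2 + l3 + 1) = card (block_perms l1 l2 l3 (l4 - 1))" if "0 < l4"
    using that unfolding g_def shift_down_block_cuts(4) block_perms_def n_def by simp
  ultimately show ?thesis by simp
qed

lemma card_block_perms_mult_fact:
  "card (block_perms l1 l2 l3 l4) * (fact l1 * fact l2 * fact l3 * fact l4) = fact (l1 + l2 + l3 + l4)"
proof (induction "l1 + l2 + l3 + l4" arbitrary: l1 l2 l3 l4)
  case 0
  then have "block_perms l1 l2 l3 l4 = {id}"
    by (auto simp: block_perms_def dec_blocks_def permutes_empty)
  then show ?case using 0 by simp
next
  case (Suc n)
  let ?F = "fact l1 * fact l2 * fact l3 * fact l4 :: nat"
  have t1: "(if 0 < l1 then card (block_perms (l1 - 1) l2 l3 l4) else 0) * ?F = l1 * fact n"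
    using Suc.hyps(1)[of "l1 - 1" l2 l3 l4] Suc.hyps(2) by (cases l1) (simp_all add: algebra_simps)
  have t2: "(if 0 < l2 then card (block_perms l1 (l2 - 1) l3 l4) else 0) * ?F = l2 * fact n"
    using Suc.hyps(1)[of l1 "l2 - 1" l3 l4] Suc.hyps(2) by (cases l2) (simp_all add: algebra_simps)
  have t3: "(if 0 < l3 then card (block_perms l1 l2 (l3 - 1) l4) else 0) * ?F = l3 * fact n"
    using Suc.hyps(1)[of l1 l2 "l3 - 1" l4] Suc.hyps(2) by (cases l3) (simp_all add: algebra_simps)
  have t4: "(if 0 < l4 then card (block_perms l1 l2 l3 (l4 - 1)) else 0) * ?F = l4 * fact n"
    using Suc.hyps(1)[of l1 l2 l3 "l4 - 1"] Suc.hyps(2) by (cases l4) (simp_all add: algebra_simps)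
  have "card (block_perms l1 l2 l3 l4) * ?F
      = (if 0 < l1 then card (block_perms (l1 - 1) l2 l3 l4) else 0) * ?F
      + (if 0 < l2 then card (block_perms l1 (l2 - 1) l3 l4) else 0) * ?F
      + (if 0 < l3 then card (block_perms l1 l2 (l3 - 1) l4) else 0) * ?F
      + (if 0 < l4 then card (block_perms l1 l2 l3 (l4 - 1)) else 0) * ?F"
    using card_block_perms_by_max[of l1 l2 l3 l4] Suc.hyps(2) by (simp only: distrib_right)
  also have "\<dots> = (l1 + l2 + l3 + l4) * fact n"
    unfolding t1 t2 t3 t4 by (simp add: algebra_simps)
  finally show ?case using Suc.hyps(2) by (metis fact_Suc of_nat_id)
qed

lemma card_block_perms:
  "card (block_perms l1 l2 l3 l4)
     = ((l1 + l2 + l3 + l4) choose (l3 + l4)) * ((l3 + l4) choose l3) * ((l1 + l2) choose l1)"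
proof -
  have "fact l3 * fact l4 * ((l3 + l4) choose l3) = (fact (l3 + l4) :: nat)"
    using binomial_fact_lemma[of l3 "l3 + l4"] by simp
  moreover have "fact l1 * fact l2 * ((l1 + l2) choose l1) = (fact (l1 + l2) :: nat)"
    using binomial_fact_lemma[of l1 "l1 + l2"] by simp
  moreover have "fact (l3 + l4) * fact (l1 + l2) * ((l1 + l2 + l3 + l4) choose (l3 + l4))
      = (fact (l1 + l2 + l3 + l4) :: nat)"
    using binomial_fact_lemma[of "l3 + l4" "l1 + l2 + l3 + l4"] by (simp add: algebra_simps)
  ultimately have "((l1 + l2 + l3 + l4) choose (l3 + l4)) * ((l3 + l4) choose l3) * ((l1 + l2) choose l1)
      * (fact l1 * fact l2 * fact l3 * fact l4) = fact (l1 + l2 + l3 + l4)"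
    by (metis (no_types, lifting) mult.assoc mult.commute mult.left_commute)
  then show ?thesis
    using card_block_perms_mult_fact[of l1 l2 l3 l4] by (metis fact_nonzero mult_cancel_right no_zero_divisors)
qed

lemma vandermonde_restricted:
  assumes "Z \<le> X + Y"
  shows "(\<Sum>k\<in>{k. k \<le> X \<and> k \<le> Z \<and> Z \<le> Y + k}. (Z choose k) * ((X + Y - Z) choose (X - k)))
    = (X + Y) choose X"
proof -
  have "(\<Sum>k\<in>{k. k \<le> X \<and> k \<le> Z \<and> Z \<le> Y + k}. (Z choose k) * ((X + Y - Z) choose (X - k)))
      = (\<Sum>k\<le>X. (Z choose k) * ((X + Y - Z) choose (X - k)))"
  proof (rule sum.mono_neutral_left)
    show "\<forall>k\<in>{..X} - {k. k \<le> X \<and> k \<le> Z \<and> Z \<le> Y + k}. (Z choose k) * ((X + Y - Z) choose (X - k)) = 0"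
      using assms by auto
  qed auto
  also have "\<dots> = (Z + (X + Y - Z)) choose X" by (rule vandermonde)
  finally show ?thesis using assms by simp
qed

section \<open>The recursion for \<open>G\<close> and its inversion\<close>

definition G_index :: "int \<Rightarrow> int \<Rightarrow> int \<Rightarrow> int set" where
  "G_index a1 a2 s = {m. a1 - m \<ge> 0 \<and> a2 - (s - m) \<ge> 0 \<and> m \<ge> 0 \<and> s - m \<ge> 0}"

lemma finite_G_index: "finite (G_index a1 a2 s)"
  by (rule finite_subset[of _ "{0..s}"]) (auto simp: G_index_def)

lemma G_eq_sum_G_index:
  "G a1 a2 s = (\<Sum>m\<in>G_index a1 a2 s. Ncount (nat (a1 - m)) (nat (a2 - (s - m))) (nat m) (nat (s - m)))"
  unfolding G_def G_index_def ..

lemma G_neg_left: "G (-1) a2 s = 0"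
  unfolding G_def by (rule sum.neutral) auto

lemma G_neg_right: "G a1 (-1) s = 0"
  unfolding G_def by (rule sum.neutral) auto

definition block_perms_total :: "int \<Rightarrow> int \<Rightarrow> int \<Rightarrow> nat" where
  "block_perms_total a1 a2 s = (\<Sum>m\<in>G_index a1 a2 s.
     card (block_perms (nat (a1 - m)) (nat (a2 - (s - m))) (nat m) (nat (s - m))))"

lemma block_perms_total_eq_binomials:
  "block_perms_total (int X) (int Y) (int Z) = ((X + Y) choose Z) * ((X + Y) choose X)"
proof -
  define N where "N = X + Y"
  define K where "K = {k. k \<le> X \<and> k \<le> Z \<and> Z \<le> Y + k}"
  have index: "G_index (int X) (int Y) (int Z) = int ` K"
  proof (intro equalityI subsetI)
    fix m assume "m \<in> G_index (int X) (int Y) (int Z)"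
    moreover then obtain k where "m = int k" unfolding G_index_def using nonneg_int_cases by auto
    ultimately show "m \<in> int ` K" unfolding G_index_def K_def by auto
  qed (auto simp: G_index_def K_def)
  have summand: "card (block_perms (nat (int X - int k)) (nat (int Y - (int Z - int k))) (nat (int k))
        (nat (int Z - int k))) = (N choose Z) * ((Z choose k) * ((N - Z) choose (X - k)))"
    if "k \<in> K" for k
  proof -
    have "nat (int X - int k) = X - k" "nat (int Y - (int Z - int k)) = Y + k - Z"
      "nat (int Z - int k) = Z - k" "X - k + (Y + k - Z) + k + (Z - k) = N" "k + (Z - k) = Z"
      "X - k + (Y + k - Z) = N - Z"
      using that unfolding K_def N_def by auto
    then show ?thesis by (simp add: card_block_perms)
  qed
  have "block_perms_total (int X) (int Y) (int Z)
      = (N choose Z) * (\<Sum>k\<in>K. (Z choose k) * ((N - Z) choose (X - k)))"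
    unfolding block_perms_total_def index sum_distrib_left
    by (rule sum.reindex_cong[of int]) (use summand in auto)
  also have "\<dots> = (N choose Z) * (N choose X)"
  proof (cases "Z \<le> N")
    case True
    then show ?thesis using vandermonde_restricted[of Z X Y] unfolding K_def N_def by simp
  next
    case False
    then show ?thesis by simp
  qed
  finally show ?thesis unfolding N_def .
qed

lemma block_perms_total_eq_G_sum:
  "block_perms_total x y s = G x y s + G (x - 1) y s + G x (y - 1) s + G (x - 1) (y - 1) s"
proof -
  let ?I = "G_index x y s"
  let ?l1 = "\<lambda>m. nat (x - m)" and ?l2 = "\<lambda>m. nat (y - (s - m))"
  let ?N = "\<lambda>m. Ncount (?l1 m) (?l2 m) (nat m) (nat (s - m))"
  have filter: "(\<Sum>m\<in>?I. if P m then f m else 0) = (\<Sum>m\<in>{m\<in>?I. P m}. f m)" for P and f :: "int \<Rightarrow> nat"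
    by (simp add: sum.inter_filter[OF finite_G_index])
  have "block_perms_total x y s = (\<Sum>m\<in>?I. ?N m)
      + (\<Sum>m\<in>?I. if 0 < ?l1 m then Ncount (?l1 m - 1) (?l2 m) (nat m) (nat (s - m)) else 0)
      + (\<Sum>m\<in>?I. if 0 < ?l2 m then Ncount (?l1 m) (?l2 m - 1) (nat m) (nat (s - m)) else 0)
      + (\<Sum>m\<in>?I. if 0 < ?l1 m \<and> 0 < ?l2 m
           then Ncount (?l1 m - 1) (?l2 m - 1) (nat m) (nat (s - m)) else 0)"
    unfolding block_perms_total_def card_block_perms_eq_Ncount_sum by (simp add: sum.distrib)
  also have "(\<Sum>m\<in>?I. if 0 < ?l1 m then Ncount (?l1 m - 1) (?l2 m) (nat m) (nat (s - m)) else 0)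
      = G (x - 1) y s"
    unfolding filter G_eq_sum_G_index
    by (rule sum.cong) (auto simp: G_index_def nat_diff_distrib')
  also have "(\<Sum>m\<in>?I. if 0 < ?l2 m then Ncount (?l1 m) (?l2 m - 1) (nat m) (nat (s - m)) else 0)
      = G x (y - 1) s"
    unfolding filter G_eq_sum_G_index
    by (rule sum.cong) (auto simp: G_index_def nat_diff_distrib')
  also have "(\<Sum>m\<in>?I. if 0 < ?l1 m \<and> 0 < ?l2 m
           then Ncount (?l1 m - 1) (?l2 m - 1) (nat m) (nat (s - m)) else 0) = G (x - 1) (y - 1) s"
    unfolding filter G_eq_sum_G_index
    by (rule sum.cong) (auto simp: G_index_def nat_diff_distrib')
  finally show ?thesis unfolding G_eq_sum_G_index .
qed

lemma binom_of_nat: "binom (int N) (int K) = int (N choose K)"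
  unfolding binom_def by (auto simp: binomial_eq_0)

lemma binom_product_eq_G_sum:
  assumes "0 \<le> x" "0 \<le> y" "0 \<le> s"
  shows "binom (x + y) s * binom (x + y) x
    = int (G x y s) + int (G (x - 1) y s) + int (G x (y - 1) s) + int (G (x - 1) (y - 1) s)"
proof -
  obtain X Y Z where "x = int X" "y = int Y" "s = int Z"
    using assms nonneg_int_cases by metis
  then show ?thesis
    using block_perms_total_eq_binomials[of X Y Z] block_perms_total_eq_G_sum[of x y s]
    by (simp add: binom_of_nat flip: of_nat_add of_nat_mult)
qed

lemma alternating_sum_telescope:
  fixes f :: "int \<Rightarrow> 'a::comm_ring_1"
  assumes "f (-1) = 0" "0 \<le> a"
  shows "(\<Sum>b\<in>{0..a}. (-1) ^ nat b * (f (a - b) + f (a - b - 1))) = f a"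
proof -
  obtain A where a: "a = int A" using assms(2) nonneg_int_cases by blast
  have "{0..int A} = int ` {..A}"
    by (auto simp: image_iff) (metis atMost_iff nat_int nonneg_int_cases of_nat_le_iff)
  then have reindex: "(\<Sum>b\<in>{0..int A}. h b) = (\<Sum>k\<le>A. h (int k))" for h :: "int \<Rightarrow> 'a"
    by (simp add: sum.reindex)
  define t where "t A k = (-1) ^ k * (f (int A - int k) + f (int A - int k - 1))" for A k :: nat
  have "(\<Sum>k\<le>A. t A k) = f (int A)"
  proof (induction A)
    case 0
    then show ?case using assms(1) by (simp add: t_def)
  next
    case (Suc A)
    have "(\<Sum>k\<le>Suc A. t (Suc A) k) = t (Suc A) 0 + (\<Sum>k\<le>A. t (Suc A) (Suc k))"
      by (rule sum.atMost_Suc_shift)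
    moreover have "t (Suc A) 0 = f (int (Suc A)) + f (int A)" by (simp add: t_def)
    moreover have "t (Suc A) (Suc k) = - t A k" for k by (simp add: t_def)
    ultimately show ?case using Suc.IH by (simp add: sum_negf)
  qed
  then show ?thesis unfolding a reindex t_def by simp
qed

lemma double_alternating_sum_inversion:
  fixes f h :: "int \<Rightarrow> int \<Rightarrow> 'a::comm_ring_1"
  assumes f_left: "\<And>y. f (-1) y = 0" and f_right: "\<And>x. f x (-1) = 0"
    and h: "\<And>x y. 0 \<le> x \<Longrightarrow> 0 \<le> y \<Longrightarrow> h x y = f x y + f (x - 1) y + f x (y - 1) + f (x - 1) (y - 1)"
    and "0 \<le> a1" "0 \<le> a2"
  shows "(\<Sum>b1\<in>{0..a1}. \<Sum>b2\<in>{0..a2}. (-1) ^ nat (b1 + b2) * h (a1 - b1) (a2 - b2)) = f a1 a2"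
proof -
  define g where "g x y = f x y + f (x - 1) y" for x y
  have "(\<Sum>b2\<in>{0..a2}. (-1) ^ nat (b1 + b2) * h (a1 - b1) (a2 - b2))
      = (-1) ^ nat b1 * (\<Sum>b2\<in>{0..a2}. (-1) ^ nat b2 * (g (a1 - b1) (a2 - b2) + g (a1 - b1) (a2 - b2 - 1)))"
    if "b1 \<in> {0..a1}" for b1
    unfolding sum_distrib_left
  proof (rule sum.cong[OF refl])
    fix b2 assume "b2 \<in> {0..a2}"
    then show "(-1) ^ nat (b1 + b2) * h (a1 - b1) (a2 - b2)
        = (-1) ^ nat b1 * ((-1) ^ nat b2 * (g (a1 - b1) (a2 - b2) + g (a1 - b1) (a2 - b2 - 1)))"
      using that h[of "a1 - b1" "a2 - b2"] by (simp add: nat_add_distrib power_add g_def algebra_simps)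
  qed
  also have "\<dots> b1 = (-1) ^ nat b1 * g (a1 - b1) a2" for b1
    using alternating_sum_telescope[of "g (a1 - b1)" a2] f_right \<open>0 \<le> a2\<close> by (simp add: g_def)
  finally have "(\<Sum>b1\<in>{0..a1}. \<Sum>b2\<in>{0..a2}. (-1) ^ nat (b1 + b2) * h (a1 - b1) (a2 - b2))
      = (\<Sum>b1\<in>{0..a1}. (-1) ^ nat b1 * (f (a1 - b1) a2 + f (a1 - b1 - 1) a2))"
    unfolding g_def by (intro sum.cong) auto
  also have "\<dots> = f a1 a2"
    using alternating_sum_telescope[of "\<lambda>x. f x a2" a1] f_left \<open>0 \<le> a1\<close> by simp
  finally show ?thesis .
qed

theorem mainTheorem12:
  fixes a1 a2 s :: int
  assumes "a1 \<ge> 0" and "a2 \<ge> 0" and "s \<ge> 0"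
  shows "int (G a1 a2 s) =
    (\<Sum>b1\<in>{0..a1}. \<Sum>b2\<in>{0..a2}.
        (-1) ^ nat (b1 + b2) * binom (a1 + a2 - b1 - b2) s * binom (a1 + a2 - b1 - b2) (a1 - b1))"
proof -
  define h where "h x y = binom (x + y) s * binom (x + y) x" for x y
  have "(\<Sum>b1\<in>{0..a1}. \<Sum>b2\<in>{0..a2}.
        (-1) ^ nat (b1 + b2) * binom (a1 + a2 - b1 - b2) s * binom (a1 + a2 - b1 - b2) (a1 - b1))
      = (\<Sum>b1\<in>{0..a1}. \<Sum>b2\<in>{0..a2}. (-1) ^ nat (b1 + b2) * h (a1 - b1) (a2 - b2))"
    unfolding h_def by (simp add: algebra_simps)
  also have "\<dots> = int (G a1 a2 s)"
  proof (rule double_alternating_sum_inversion)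
    show "h x y = int (G x y s) + int (G (x - 1) y s) + int (G x (y - 1) s) + int (G (x - 1) (y - 1) s)"
      if "0 \<le> x" "0 \<le> y" for x y
      unfolding h_def using binom_product_eq_G_sum that assms(3) by blast
  qed (use assms in \<open>simp_all add: G_neg_left G_neg_right\<close>)
  finally show ?thesis ..
qed

end
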